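(* Let $n$ be an odd positive integer and $p=\frac{n-1}{2}$. The $\mathrm{SU}(\frac{n+1}{2})\times\mathrm{SU}(\frac{n+1}{2})$-equivariant spectra of the harmonic maps $\psi_1$ and $\psi_{-1}$ are both equal to $\{\lambda_j=4j(j+n+2): j\in\mathbb Z_{\ge0}\}$.
   Context: $\mathbb{CP}^n$ carries the Fubini–Study metric (the metric making $\mathbb S^{2n+1}\to\mathbb{CP}^n$ a Riemannian submersion). $G=\mathrm{SU}(p+1)\times\mathrm{SU}(n-p)$ acts by $(A,B)\cdot[Z]=[\operatorname{diag}(A,B)Z]$; with $\gamma(t)=[\cos t\,e_1+\sin t\,e_{p+2}]$ every point is $g\cdot\gamma(t)$, $g\in G$, $t\in[0,\pi/2]$. For $\rho\ne0$ let $r_\rho(t)=\arctan(\rho\tan t)$ on $[0,\pi/2)$, $r_\rho(\pi/2)=\operatorname{sign}(\rho)\pi/2$, and $\psi_\rho(g\cdot\gamma(t))=g\cdot\gamma(r_\rho(t))$ (so $\psi_1=\mathrm{id}$ and $r_{-1}(t)=-t$). The equivariant spectrum of $\psi_\rho$ is the set of $\lambda\in\mathbb R$ for which \[ \ddot\xi+\big[(2n-2p-1)\cot t-(2p+1)\tan t\big]\dot\xi-\Big[2(n-p-1)\frac{\cos 2r_\rho(t)}{\sin^2t}-2p\frac{\cos2r_\rho(t)}{\cos^2t}+4\frac{\cos4r_\rho(t)}{\sin^22t}\Big]\xi+\lambda\xi=0 \] has a nonzero solution $\xi\in C^\infty_0([0,\tfrac\pi2])$ (smooth, vanishing at $0$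 and $\pi/2$). *)

theory Defs
  imports "HOL-Analysis.Analysis"
begin

definition r_fun :: "real \<Rightarrow> real \<Rightarrow> real" where
  "r_fun \<rho> t = (if t = pi/2 then sgn \<rho> * pi/2 else arctan (\<rho> * tan t))"

definition smooth_on_Icc :: "(real \<Rightarrow> real) \<Rightarrow> (nat \<Rightarrow> real \<Rightarrow> real) \<Rightarrow> bool" where
  "smooth_on_Icc \<xi> D \<longleftrightarrow> D 0 = \<xi> \<and>
     (\<forall>k. \<forall>t\<in>{0..pi/2}. (D k has_real_derivative D (Suc k) t) (at t within {0..pi/2}))"

text \<open>Equivariant spectrum of psi_rho on CP^n for the SU(p+1) x SU(n-p) action.\<close>
definition equivariant_spectrum :: "nat \<Rightarrow> nat \<Rightarrow> real \<Rightarrow> real set" where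
  "equivariant_spectrum n p \<rho> = {lam. \<exists>\<xi> D. smooth_on_Icc \<xi> D \<and>
      \<xi> 0 = 0 \<and> \<xi> (pi/2) = 0 \<and> (\<exists>t\<in>{0..pi/2}. \<xi> t \<noteq> 0) \<and>
      (\<forall>t\<in>{0<..<pi/2}.
         D 2 t + ((2 * real n - 2 * real p - 1) * cot t - (2 * real p + 1) * tan t) * D 1 t
         - (2 * (real n - real p - 1) * cos (2 * r_fun \<rho> t) / (sin t)\<^sup>2
            - 2 * real p * cos (2 * r_fun \<rho> t) / (cos t)\<^sup>2
            + 4 * cos (4 * r_fun \<rho> t) / (sin (2 * t))\<^sup>2) * \<xi> t
         + lam * \<xi> t = 0)}"

end

theory Submission
  imports Defs "HOL-Computational_Algebra.Polynomial"
begin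

text \<open>For \<open>\<rho> = \<plusminus>1\<close> we have \<open>r\<^sub>\<rho>(t) = \<rho> t\<close>, and for \<open>n = 2p + 1\<close> the equation simplifies to
  \<open>\<xi>'' + 2n cot 2t \<xi>' - (4n / sin\<^sup>2 2t - 4(n + 1)) \<xi> + \<lambda> \<xi> = 0\<close>, a Sturm--Liouville
  equation with weight \<open>sin\<^sup>n 2t\<close>. The substitution \<open>\<xi> = sin 2t \<cdot> G(cos 2t)\<close> turns it into the
  Gegenbauer equation \<open>(1 - x\<^sup>2) G'' - (n + 3) x G' + (\<lambda>/4) G = 0\<close>, which has a polynomial solution
  of degree \<open>j\<close> exactly when \<open>\<lambda> = 4j(j + n + 2)\<close>; this gives the eigenfunctions.
  Conversely, for any other \<open>\<lambda>\<close> Green's identity makes a solution \<open>\<xi>\<close> orthogonal to all these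
  eigenfunctions. They are triangular in the basis \<open>sin 2t cos\<^sup>i 2t\<close>, so all moments
  \<open>\<integral> sin\<^sup>n\<^sup>+\<^sup>1 2t \<xi>(t) cos\<^sup>i 2t dt\<close> vanish, and Weierstrass approximation in the variable
  \<open>cos 2t\<close> forces \<open>\<xi> = 0\<close>.\<close>

text \<open>\<open>(P, Q)\<close> represents \<open>t \<mapsto> P(cos 2t) + sin 2t \<cdot> Q(cos 2t)\<close>; these functions are closed under
  differentiation, which makes the eigenfunctions smooth on \<open>[0, \<pi>/2]\<close> for free.\<close>

definition cos2_poly :: "real poly \<times> real poly \<Rightarrow> real \<Rightarrow> real" where
  "cos2_poly PQ t = poly (fst PQ) (cos (2*t)) + sin (2*t) * poly (snd PQ) (cos (2*t))"

definition cos2_poly_deriv :: "real poly \<times> real poly \<Rightarrow> real poly \<times> real poly" where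
  "cos2_poly_deriv PQ =
     (smult 2 (pCons 0 (snd PQ) - pderiv (snd PQ) + pCons 0 (pCons 0 (pderiv (snd PQ)))),
      - smult 2 (pderiv (fst PQ)))"

lemma has_real_derivative_cos2_poly:
  "(cos2_poly PQ has_real_derivative cos2_poly (cos2_poly_deriv PQ) t) (at t)"
proof -
  obtain P Q where PQ: "PQ = (P, Q)" by (cases PQ)
  define s c where "s = sin (2*t)" and "c = cos (2*t)"
  have s_sq: "s * (s * X) = X - c * (c * X)" for X
  proof -
    have "s * s = 1 - c * c"
      unfolding s_def c_def using sin_cos_squared_add3[of "2*t"] by linarith
    then show ?thesis by (metis mult.assoc left_diff_distrib mult_1)
  qed
  have "(cos2_poly PQ has_real_derivative
          poly (pderiv P) c * (- s * 2) + (c * 2 * poly Q c + s * (poly (pderiv Q) c * (- s * 2)))) (at t)"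
    unfolding PQ cos2_poly_def s_def c_def
    by (auto intro!: derivative_eq_intros DERIV_chain2[OF poly_DERIV] simp: algebra_simps)
  also have "poly (pderiv P) c * (- s * 2) + (c * 2 * poly Q c + s * (poly (pderiv Q) c * (- s * 2)))
      = cos2_poly (cos2_poly_deriv PQ) t"
    unfolding PQ cos2_poly_def cos2_poly_deriv_def s_def[symmetric] c_def[symmetric]
    by (simp add: algebra_simps s_sq)
  finally show ?thesis .
qed

lemma smooth_on_Icc_cos2_poly:
  "smooth_on_Icc (cos2_poly PQ) (\<lambda>k. cos2_poly ((cos2_poly_deriv ^^ k) PQ))"
  unfolding smooth_on_Icc_def
  by (auto intro: has_field_derivative_at_within has_real_derivative_cos2_poly)

definition gegenbauer_op :: "real \<Rightarrow> real \<Rightarrow> real poly \<Rightarrow> real poly" where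
  "gegenbauer_op a \<mu> G = pderiv (pderiv G) - pCons 0 (pCons 0 (pderiv (pderiv G)))
     - smult a (pCons 0 (pderiv G)) + smult \<mu> G"

lemma coeff_gegenbauer_op:
  "coeff (gegenbauer_op a \<mu> G) m =
     (real m + 2) * (real m + 1) * coeff G (m + 2) - (real m * (real m + a - 1) - \<mu>) * coeff G m"
proof -
  consider "m = 0" | "m = 1" | k where "m = Suc (Suc k)"
    by (metis One_nat_def not0_implies_Suc)
  then show ?thesis
    by cases (simp_all add: gegenbauer_op_def coeff_pderiv algebra_simps)
qed

fun gegenbauer_coeff :: "real \<Rightarrow> nat \<Rightarrow> nat \<Rightarrow> real" where
  "gegenbauer_coeff a j 0 = (if even j then 1 else 0)"
| "gegenbauer_coeff a j (Suc 0) = (if odd j then 1 else 0)"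
| "gegenbauer_coeff a j (Suc (Suc k)) =
     (real k * (real k + a - 1) - real j * (real j + a - 1)) * gegenbauer_coeff a j k
       / ((real k + 2) * (real k + 1))"

lemma gegenbauer_coeff_recurrence:
  "(real k + 2) * (real k + 1) * gegenbauer_coeff a j (Suc (Suc k)) =
     (real k * (real k + a - 1) - real j * (real j + a - 1)) * gegenbauer_coeff a j k"
  by simp

lemma gegenbauer_coeff_eq_0_odd: "odd (k + j) \<Longrightarrow> gegenbauer_coeff a j k = 0"
  by (induction a j k rule: gegenbauer_coeff.induct) auto

lemma gegenbauer_coeff_eq_0_gt: "j < k \<Longrightarrow> gegenbauer_coeff a j k = 0"
proof (induction a j k rule: gegenbauer_coeff.induct)
  case (3 a j k)
  have "odd (Suc (Suc k) + j) \<or> k = j \<or> j < k"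
    using "3.prems" by presburger
  then show ?case
    using "3.IH" gegenbauer_coeff_eq_0_odd[of "Suc (Suc k)" j a] by auto
qed auto

lemma gegenbauer_coeff_nonzero:
  assumes "a > 0" "k \<le> j" "even (k + j)"
  shows "gegenbauer_coeff a j k \<noteq> 0"
  using assms
proof (induction a j k rule: gegenbauer_coeff.induct)
  case (3 a j k)
  have "0 < (real j - real k) * (real j + real k + a - 1)"
    using "3.prems" by (intro mult_pos_pos) auto
  then have "real k * (real k + a - 1) < real j * (real j + a - 1)"
    by (simp add: algebra_simps)
  then show ?case using 3 by simp
qed auto

text \<open>Up to normalisation this is the Gegenbauer polynomial \<open>C\<^sub>j\<^sup>((a-1)/2)\<close>.\<close>

definition gegenbauer_poly :: "real \<Rightarrow> nat \<Rightarrow> real poly" where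
  "gegenbauer_poly a j = (\<Sum>k\<le>j. monom (gegenbauer_coeff a j k) k)"

lemma coeff_gegenbauer_poly: "coeff (gegenbauer_poly a j) k = gegenbauer_coeff a j k"
  unfolding gegenbauer_poly_def by (auto simp: coeff_sum gegenbauer_coeff_eq_0_gt)

lemma poly_gegenbauer_poly: "poly (gegenbauer_poly a j) x = (\<Sum>k\<le>j. gegenbauer_coeff a j k * x ^ k)"
  unfolding gegenbauer_poly_def by (simp add: poly_sum poly_monom)

lemma gegenbauer_poly_nonzero: "a > 0 \<Longrightarrow> gegenbauer_poly a j \<noteq> 0"
  by (metis coeff_0 coeff_gegenbauer_poly gegenbauer_coeff_nonzero le_refl odd_add)

lemma gegenbauer_op_gegenbauer_poly:
  "gegenbauer_op a (real j * (real j + a - 1)) (gegenbauer_poly a j) = 0"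
  by (rule poly_eqI) (simp add: coeff_gegenbauer_op coeff_gegenbauer_poly gegenbauer_coeff_recurrence
      del: gegenbauer_coeff.simps)

lemma cos2_poly_odd: "cos2_poly (0, G) t = sin (2*t) * poly G (cos (2*t))"
  by (simp add: cos2_poly_def)

lemma cos2_poly_odd_nonzero:
  assumes "G \<noteq> 0"
  shows "\<exists>t\<in>{0<..<pi/2}. cos2_poly (0, G) t \<noteq> 0"
proof (rule ccontr)
  assume "\<not> ?thesis"
  then have vanish: "sin (2*t) * poly G (cos (2*t)) = 0" if "t \<in> {0<..<pi/2}" for t
    using that by (auto simp: cos2_poly_odd)
  have "{-1<..<1} \<subseteq> {x. poly G x = 0}"
  proof
    fix x :: real
    assume x: "x \<in> {-1<..<1}"
    then have "arccos x / 2 \<in> {0<..<pi/2}"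
      using arccos_lt_bounded[of x] by auto
    then have "sin (arccos x) * poly G x = 0"
      using vanish[of "arccos x / 2"] x by simp
    moreover have "sin (arccos x) \<noteq> 0"
      using sin_arccos_nonzero x by auto
    ultimately show "x \<in> {x. poly G x = 0}" by simp
  qed
  then have "finite {-1<..<1::real}"
    using poly_roots_finite[OF assms] finite_subset by blast
  then show False
    using infinite_Ioo[of "-1::real" 1] by simp
qed

text \<open>The equation of the equivariant spectrum for \<open>\<rho> = \<plusminus>1\<close> and \<open>n = 2p + 1\<close>, see
  \<open>equivariant_spectrum_pm1\<close>.\<close>

definition reduced_ode :: "nat \<Rightarrow> real \<Rightarrow> (nat \<Rightarrow> real \<Rightarrow> real) \<Rightarrow> bool" where
  "reduced_ode n lam D \<longleftrightarrow> (\<forall>t\<in>{0<..<pi/2}.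
     D 2 t + 2 * real n * cot (2*t) * D 1 t
       - (4 * real n / (sin (2*t))\<^sup>2 - 4 * (real n + 1)) * D 0 t + lam * D 0 t = 0)"

lemma reduced_operator_cos2_poly_odd:
  assumes "sin (2*t) \<noteq> 0"
  shows "cos2_poly ((cos2_poly_deriv ^^ 2) (0, G)) t
      + 2 * real n * cot (2*t) * cos2_poly (cos2_poly_deriv (0, G)) t
      - (4 * real n / (sin (2*t))\<^sup>2 - 4 * (real n + 1)) * cos2_poly (0, G) t
      + 4 * \<mu> * cos2_poly (0, G) t
    = 4 * sin (2*t) * poly (gegenbauer_op (real n + 3) \<mu> G) (cos (2*t))"
proof -
  define s c where "s = sin (2*t)" and "c = cos (2*t)"
  have s_sq: "s * s = 1 - c * c"
    unfolding s_def c_def using sin_cos_squared_add3[of "2*t"] by linarith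
  show ?thesis
    using assms s_sq
    unfolding cos2_poly_def cos2_poly_deriv_def gegenbauer_op_def cot_def s_def[symmetric] c_def[symmetric]
    by (simp add: numeral_2_eq_2 pderiv_pCons pderiv_add pderiv_diff pderiv_smult
        field_simps power2_eq_square) algebra
qed

lemma reduced_ode_gegenbauer:
  "reduced_ode n (4 * real j * (real j + real n + 2))
     (\<lambda>k. cos2_poly ((cos2_poly_deriv ^^ k) (0, gegenbauer_poly (real n + 3) j)))"
proof -
  have "sin (2*t) \<noteq> 0" if "t \<in> {0<..<pi/2}" for t
    using that sin_gt_zero[of "2*t"] by auto
  then show ?thesis
    unfolding reduced_ode_def
    using reduced_operator_cos2_poly_odd[where \<mu> = "real j * (real j + real n + 2)" and n = n
        and G = "gegenbauer_poly (real n + 3) j"]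
      gegenbauer_op_gegenbauer_poly[of "real n + 3" j]
    by (simp add: algebra_simps)
qed

lemma smooth_on_Icc_zero: "smooth_on_Icc \<xi> D \<Longrightarrow> D 0 = \<xi>"
  unfolding smooth_on_Icc_def by simp

lemma smooth_on_Icc_continuous_on:
  assumes "smooth_on_Icc \<xi> D"
  shows "continuous_on {0..pi/2} (D k)"
proof (rule DERIV_continuous_on)
  fix t :: real
  assume "t \<in> {0..pi/2}"
  then show "(D k has_real_derivative D (Suc k) t) (at t within {0..pi/2})"
    using assms unfolding smooth_on_Icc_def by blast
qed

lemma smooth_on_Icc_has_real_derivative:
  assumes "smooth_on_Icc \<xi> D" "t \<in> {0<..<pi/2}"
  shows "(D k has_real_derivative D (Suc k) t) (at t)"
proof -
  have "(D k has_real_derivative D (Suc k) t) (at t within {0..pi/2})"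
    using assms unfolding smooth_on_Icc_def by auto
  moreover have "at t within {0..pi/2} = at t"
    using assms(2) by (intro at_within_Icc_at) auto
  ultimately show ?thesis by simp
qed

lemma reduced_ode_wronskian_derivative:
  assumes "smooth_on_Icc \<xi> D" "reduced_ode n lam D" "smooth_on_Icc \<phi> F" "reduced_ode n lam' F"
    and t: "t \<in> {0<..<pi/2}"
  shows "((\<lambda>t. sin (2*t) ^ n * (D 1 t * F 0 t - D 0 t * F 1 t)) has_real_derivative
      (lam' - lam) * (sin (2*t) ^ n * D 0 t * F 0 t)) (at t)"
proof -
  have s: "sin (2*t) > 0"
    using t by (intro sin_gt_zero) auto
  have D2: "D 2 t = - 2 * real n * cot (2*t) * D 1 t
      + (4 * real n / (sin (2*t))\<^sup>2 - 4 * (real n + 1)) * D 0 t - lam * D 0 t"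
    and F2: "F 2 t = - 2 * real n * cot (2*t) * F 1 t
      + (4 * real n / (sin (2*t))\<^sup>2 - 4 * (real n + 1)) * F 0 t - lam' * F 0 t"
    using assms(2,4) t unfolding reduced_ode_def by (auto simp: algebra_simps)
  have pow: "real n * sin (2*t) ^ (n - 1) = real n * sin (2*t) ^ n / sin (2*t)"
    using s by (cases n) auto
  have "((\<lambda>t. sin (2*t) ^ n * (D 1 t * F 0 t - D 0 t * F 1 t)) has_real_derivative
      real n * sin (2*t) ^ (n - 1) * (cos (2*t) * 2) * (D 1 t * F 0 t - D 0 t * F 1 t)
      + sin (2*t) ^ n * (D 2 t * F 0 t + D 1 t * F 1 t - (D 1 t * F 1 t + D 0 t * F 2 t))) (at t)"
    using smooth_on_Icc_has_real_derivative[OF assms(1) t, of 0]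
      smooth_on_Icc_has_real_derivative[OF assms(1) t, of 1]
      smooth_on_Icc_has_real_derivative[OF assms(3) t, of 0]
      smooth_on_Icc_has_real_derivative[OF assms(3) t, of 1]
    by (auto intro!: derivative_eq_intros simp: numeral_2_eq_2)
  moreover have "real n * sin (2*t) ^ (n - 1) * (cos (2*t) * 2) * (D 1 t * F 0 t - D 0 t * F 1 t)
      + sin (2*t) ^ n * (D 2 t * F 0 t + D 1 t * F 1 t - (D 1 t * F 1 t + D 0 t * F 2 t))
      = (lam' - lam) * (sin (2*t) ^ n * D 0 t * F 0 t)"
    unfolding pow D2 F2 cot_def using s by (simp add: field_simps)
  ultimately show ?thesis by simp
qed

lemma reduced_ode_orthogonal:
  assumes "n \<ge> 1" and \<xi>: "smooth_on_Icc \<xi> D" "reduced_ode n lam D"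
    and \<phi>: "smooth_on_Icc \<phi> F" "reduced_ode n lam' F" and "lam \<noteq> lam'"
  shows "((\<lambda>t. sin (2*t) ^ n * \<xi> t * \<phi> t) has_integral 0) {0..pi/2}"
proof -
  define W where "W t = sin (2*t) ^ n * (D 1 t * F 0 t - D 0 t * F 1 t)" for t
  have "continuous_on {0..pi/2} W"
    unfolding W_def using smooth_on_Icc_continuous_on[OF \<xi>(1)] smooth_on_Icc_continuous_on[OF \<phi>(1)]
    by (intro continuous_intros) auto
  then have "((\<lambda>t. (lam' - lam) * (sin (2*t) ^ n * D 0 t * F 0 t)) has_integral W (pi/2) - W 0) {0..pi/2}"
    using reduced_ode_wronskian_derivative[OF \<xi> \<phi>]
    by (intro fundamental_theorem_of_calculus_interior)
       (auto simp: W_def has_real_derivative_iff_has_vector_derivative)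
  moreover have "W (pi/2) = 0" "W 0 = 0" \<comment> \<open>the weight \<open>sin\<^sup>n 2t\<close> vanishes at both ends\<close>
    unfolding W_def using \<open>n \<ge> 1\<close> by auto
  moreover note smooth_on_Icc_zero[OF \<xi>(1)] smooth_on_Icc_zero[OF \<phi>(1)]
  ultimately have "((\<lambda>t. (lam' - lam) * (sin (2*t) ^ n * \<xi> t * \<phi> t)) has_integral 0) {0..pi/2}"
    by simp
  from has_integral_mult_right[OF this, of "1 / (lam' - lam)"]
  show ?thesis using \<open>lam \<noteq> lam'\<close> by simp
qed

lemma reduced_ode_cos_moments:
  assumes "n \<ge> 1" "smooth_on_Icc \<xi> D" "reduced_ode n lam D"
    and not_eigen: "\<forall>j. lam \<noteq> 4 * real j * (real j + real n + 2)"
  shows "((\<lambda>t. sin (2*t) ^ Suc n * \<xi> t * cos (2*t) ^ i) has_integral 0) {0..pi/2}"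
proof (induction i rule: less_induct)
  case (less i)
  \<comment> \<open>the \<open>i\<close>-th eigenfunction is \<open>sin 2t\<close> times a polynomial of exact degree \<open>i\<close> in \<open>cos 2t\<close>\<close>
  define h where "h t = sin (2*t) ^ Suc n * \<xi> t" for t
  define c where "c = gegenbauer_coeff (real n + 3) i"
  have orthogonal:
    "((\<lambda>t. sin (2*t) ^ n * \<xi> t * cos2_poly (0, gegenbauer_poly (real n + 3) i) t) has_integral 0)
      {0..pi/2}"
    using reduced_ode_orthogonal[OF assms(1-3) smooth_on_Icc_cos2_poly reduced_ode_gegenbauer]
      not_eigen by simp
  have expand: "sin (2*t) ^ n * \<xi> t * cos2_poly (0, gegenbauer_poly (real n + 3) i) t =
      (\<Sum>k<i. c k * (h t * cos (2*t) ^ k)) + c i * (h t * cos (2*t) ^ i)" for t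
    unfolding cos2_poly_odd poly_gegenbauer_poly h_def c_def lessThan_Suc_atMost[symmetric] sum.lessThan_Suc
    by (simp add: sum_distrib_left algebra_simps)
  have lower: "((\<lambda>t. \<Sum>k<i. c k * (h t * cos (2*t) ^ k)) has_integral (\<Sum>k<i. c k * 0))
      {0..pi/2}"
    by (intro has_integral_sum has_integral_mult_right) (use less.IH h_def in auto)
  have "((\<lambda>t. c i * (h t * cos (2*t) ^ i)) has_integral 0) {0..pi/2}"
    using has_integral_diff[OF orthogonal[unfolded expand] lower] by simp
  from has_integral_mult_right[OF this, of "1 / c i"]
  show ?case
    using gegenbauer_coeff_nonzero[of "real n + 3" i i] unfolding c_def h_def by simp
qed

lemma cos2_polynomial_approximation:
  assumes "continuous_on {0..pi/2} f" "e > 0"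
  obtains a N where "\<And>t. t \<in> {0..pi/2} \<Longrightarrow> \<bar>f t - (\<Sum>i\<le>N. a i * cos (2*t) ^ i)\<bar> < e"
proof -
  have "continuous_on {-1..1} (\<lambda>x. arccos x / 2)"
    by (intro continuous_intros continuous_on_arccos') auto
  moreover have "(\<lambda>x. arccos x / 2) ` {-1..1} \<subseteq> {0..pi/2}"
    using arccos_lbound arccos_ubound by fastforce
  ultimately have "continuous_on {-1..1} (\<lambda>x. f (arccos x / 2))"
    using continuous_on_compose2[OF assms(1)] by blast
  then obtain g where g: "real_polynomial_function g" "\<And>x. x \<in> {-1..1} \<Longrightarrow> \<bar>f (arccos x / 2) - g x\<bar> < e"
    using Stone_Weierstrass_real_polynomial_function[OF compact_Icc _ assms(2)] by blast
  obtain a N where aN: "g = (\<lambda>x. \<Sum>i\<le>N. a i * x ^ i)"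
    using g(1) real_polynomial_function_iff_sum by blast
  show ?thesis
  proof (rule that)
    fix t :: real
    assume "t \<in> {0..pi/2}"
    then have "arccos (cos (2*t)) / 2 = t"
      by (subst arccos_cos) auto
    then show "\<bar>f t - (\<Sum>i\<le>N. a i * cos (2*t) ^ i)\<bar> < e"
      using g(2)[of "cos (2*t)"] aN by simp
  qed
qed

lemma has_integral_zero_if_cos2_moments_zero:
  assumes h: "continuous_on {0..pi/2} h" and f: "continuous_on {0..pi/2} f"
    and moments: "\<And>i. ((\<lambda>t. h t * cos (2*t) ^ i) has_integral 0) {0..pi/2}"
  shows "((\<lambda>t. h t * f t) has_integral 0) {0..pi/2}"
proof -
  define I where "I = integral {0..pi/2} (\<lambda>t. h t * f t)"
  have I: "((\<lambda>t. h t * f t) has_integral I) {0..pi/2}"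
    unfolding I_def by (intro integrable_integral integrable_continuous_real continuous_intros h f)
  obtain B where B: "B > 0" "\<And>t. t \<in> {0..pi/2} \<Longrightarrow> \<bar>h t\<bar> \<le> B"
    using compact_imp_bounded[OF compact_continuous_image[OF h compact_Icc]]
    unfolding bounded_pos by auto
  have bound: "\<bar>I\<bar> \<le> B * e * (pi/2)" if "e > 0" for e
  proof -
    obtain a N where approx: "\<And>t. t \<in> {0..pi/2} \<Longrightarrow> \<bar>f t - (\<Sum>i\<le>N. a i * cos (2*t) ^ i)\<bar> < e"
      using cos2_polynomial_approximation[OF f \<open>e > 0\<close>] by blast
    have poly_moment: "((\<lambda>t. \<Sum>i\<le>N. a i * (h t * cos (2*t) ^ i)) has_integral (\<Sum>i\<le>N. a i * 0))
        {0..pi/2}"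
      by (intro has_integral_sum has_integral_mult_right moments) auto
    have error_integral:
      "((\<lambda>t. h t * (f t - (\<Sum>i\<le>N. a i * cos (2*t) ^ i))) has_integral I) (cbox 0 (pi/2))"
      using has_integral_diff[OF I poly_moment] by (simp add: sum_distrib_left algebra_simps)
    have error_bound: "norm (h t * (f t - (\<Sum>i\<le>N. a i * cos (2*t) ^ i))) \<le> B * e"
      if "t \<in> cbox 0 (pi/2)" for t
      using B(2)[of t] approx[of t] that unfolding abs_mult real_norm_def
      by (intro mult_mono) auto
    show ?thesis
      using has_integral_bound[OF _ error_integral error_bound] B(1) \<open>e > 0\<close> by simp
  qed
  have "\<bar>I\<bar> \<le> 0 + e" if "e > 0" for e
  proof -
    have "\<bar>I\<bar> \<le> B * (e / (B * (pi/2))) * (pi/2)"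
      using B(1) that by (intro bound) simp
    also have "\<dots> = 0 + e"
      using B(1) by simp
    finally show ?thesis .
  qed
  then have "\<bar>I\<bar> \<le> 0"
    by (rule field_le_epsilon)
  then have "I = 0"
    by simp
  then show ?thesis
    using I by simp
qed

lemma reduced_ode_zero_if_not_eigenvalue:
  assumes "n \<ge> 1" "smooth_on_Icc \<xi> D" "reduced_ode n lam D"
    and "\<forall>j. lam \<noteq> 4 * real j * (real j + real n + 2)"
    and t: "t \<in> {0<..<pi/2}"
  shows "\<xi> t = 0"
proof -
  define q where "q t = sin (2*t) ^ Suc n * \<xi> t * \<xi> t" for t
  have \<xi>: "continuous_on {0..pi/2} \<xi>"
    using smooth_on_Icc_continuous_on[OF assms(2), of 0] smooth_on_Icc_zero[OF assms(2)] by simp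
  then have "continuous_on {0..pi/2} (\<lambda>t. sin (2*t) ^ Suc n * \<xi> t)"
    by (intro continuous_intros \<xi>)
  then have q_integral: "(q has_integral 0) {0..pi/2}"
    unfolding q_def
    using has_integral_zero_if_cos2_moments_zero[OF _ \<xi> reduced_ode_cos_moments[OF assms(1-4)]]
    by simp
  have q_continuous: "continuous_on {0..pi/2} q"
    unfolding q_def by (intro continuous_intros \<xi>)
  have q_nonneg: "0 \<le> q u" if "u \<in> {0..pi/2}" for u
    using that unfolding q_def mult.assoc
    by (intro mult_nonneg_nonneg zero_le_power sin_ge_zero zero_le_square) auto
  have "q t = 0"
    by (rule has_integral_0_cbox_imp_0[of 0 "pi/2" q])
       (use q_continuous q_nonneg q_integral t in auto)
  moreover have "sin (2*t) > 0"
    using t by (intro sin_gt_zero) auto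
  ultimately show ?thesis
    unfolding q_def by simp
qed

lemma r_fun_pm1:
  assumes "t \<in> {0<..<pi/2}" "\<rho> = 1 \<or> \<rho> = -1"
  shows "r_fun \<rho> t = \<rho> * t"
  using assms by (auto simp: r_fun_def arctan_minus arctan_tan)

lemma equivariant_ode_coefficients_pm1:
  fixes N P :: real
  assumes N: "N = 2 * P + 1" and t: "t \<in> {0<..<pi/2}"
  shows "(2 * N - 2 * P - 1) * cot t - (2 * P + 1) * tan t = 2 * N * cot (2*t)"
    and "2 * (N - P - 1) * cos (2*t) / (sin t)\<^sup>2 - 2 * P * cos (2*t) / (cos t)\<^sup>2
           + 4 * cos (4*t) / (sin (2*t))\<^sup>2 = 4 * N / (sin (2*t))\<^sup>2 - 4 * (N + 1)"
proof -
  define s c where "s = sin t" and "c = cos t"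
  have "s > 0" "c > 0"
    unfolding s_def c_def using t by (auto intro: sin_gt_zero cos_gt_zero)
  have sc: "s * s + c * c = 1"
    unfolding s_def c_def using sin_cos_squared_add[of t] by (simp add: power2_eq_square)
  have double: "cos (2*t) = c * c - s * s" "sin (2*t) = 2 * s * c"
    unfolding s_def c_def by (simp_all add: cos_double sin_double power2_eq_square)
  have quad: "cos (4*t) = 2 * (c * c - s * s)\<^sup>2 - 1"
    using cos_double_cos[of "2*t"] double(1) by simp
  show "(2 * N - 2 * P - 1) * cot t - (2 * P + 1) * tan t = 2 * N * cot (2*t)"
    unfolding cot_def tan_def double s_def[symmetric] c_def[symmetric] N
    using \<open>s > 0\<close> \<open>c > 0\<close> by (simp add: field_simps)
  show "2 * (N - P - 1) * cos (2*t) / (sin t)\<^sup>2 - 2 * P * cos (2*t) / (cos t)\<^sup>2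
           + 4 * cos (4*t) / (sin (2*t))\<^sup>2 = 4 * N / (sin (2*t))\<^sup>2 - 4 * (N + 1)"
    unfolding quad double s_def[symmetric] c_def[symmetric] N
    using \<open>s > 0\<close> \<open>c > 0\<close> sc by (simp add: field_simps power2_eq_square) algebra
qed

definition reduced_spectrum :: "nat \<Rightarrow> real set" where
  "reduced_spectrum n = {lam. \<exists>\<xi> D. smooth_on_Icc \<xi> D \<and>
     \<xi> 0 = 0 \<and> \<xi> (pi/2) = 0 \<and> (\<exists>t\<in>{0..pi/2}. \<xi> t \<noteq> 0) \<and> reduced_ode n lam D}"

lemma equivariant_spectrum_pm1:
  assumes "real n = 2 * real p + 1" "\<rho> = 1 \<or> \<rho> = -1"
  shows "equivariant_spectrum n p \<rho> = reduced_spectrum n"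
proof -
  have coefficients:
    "(2 * real n - 2 * real p - 1) * cot t - (2 * real p + 1) * tan t = 2 * real n * cot (2*t)"
    "2 * (real n - real p - 1) * cos (2 * r_fun \<rho> t) / (sin t)\<^sup>2
       - 2 * real p * cos (2 * r_fun \<rho> t) / (cos t)\<^sup>2 + 4 * cos (4 * r_fun \<rho> t) / (sin (2*t))\<^sup>2
     = 4 * real n / (sin (2*t))\<^sup>2 - 4 * (real n + 1)"
    if "t \<in> {0<..<pi/2}" for t
    using equivariant_ode_coefficients_pm1[OF assms(1) that] r_fun_pm1[OF that assms(2)] assms(2)
    by auto
  show ?thesis
    unfolding equivariant_spectrum_def reduced_spectrum_def reduced_ode_def
    by (intro Collect_cong ex_cong1 conj_cong refl ball_cong)
       (simp_all only: coefficients smooth_on_Icc_def)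
qed

lemma gegenbauer_eigenvalue_in_reduced_spectrum:
  "4 * real j * (real j + real n + 2) \<in> reduced_spectrum n"
proof -
  let ?G = "gegenbauer_poly (real n + 3) j"
  have "?G \<noteq> 0"
    by (rule gegenbauer_poly_nonzero) simp
  then obtain t where "t \<in> {0<..<pi/2}" "cos2_poly (0, ?G) t \<noteq> 0"
    using cos2_poly_odd_nonzero by blast
  then have "\<exists>t\<in>{0..pi/2}. cos2_poly (0, ?G) t \<noteq> 0"
    by (intro bexI[of _ t]) auto
  moreover have "cos2_poly (0, ?G) 0 = 0" "cos2_poly (0, ?G) (pi/2) = 0"
    by (simp_all add: cos2_poly_odd)
  ultimately show ?thesis
    unfolding reduced_spectrum_def
    using smooth_on_Icc_cos2_poly reduced_ode_gegenbauer by blast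
qed

lemma reduced_spectrum_imp_gegenbauer_eigenvalue:
  assumes "n \<ge> 1" "lam \<in> reduced_spectrum n"
  shows "\<exists>j. lam = 4 * real j * (real j + real n + 2)"
proof (rule ccontr)
  assume not_eigen: "\<nexists>j. lam = 4 * real j * (real j + real n + 2)"
  obtain \<xi> D t where \<xi>: "smooth_on_Icc \<xi> D" "reduced_ode n lam D"
    and "\<xi> 0 = 0" "\<xi> (pi/2) = 0" "t \<in> {0..pi/2}" "\<xi> t \<noteq> 0"
    using assms(2) unfolding reduced_spectrum_def by blast
  then have "t \<noteq> 0" "t \<noteq> pi/2"
    by metis+
  with \<open>t \<in> {0..pi/2}\<close> have "t \<in> {0<..<pi/2}"
    by auto
  then have "\<xi> t = 0"
    using reduced_ode_zero_if_not_eigenvalue[OF assms(1) \<xi>] not_eigen by blast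
  with \<open>\<xi> t \<noteq> 0\<close> show False ..
qed

theorem theoremD:
  fixes n p :: nat
  assumes "odd n" and "p = (n - 1) div 2"
  shows "equivariant_spectrum n p 1 = {4 * real j * (real j + real n + 2) | j. True} \<and>
         equivariant_spectrum n p (-1) = {4 * real j * (real j + real n + 2) | j. True}"
proof -
  have n: "real n = 2 * real p + 1" "n \<ge> 1"
    using assms by (auto elim!: oddE)
  have "reduced_spectrum n = {4 * real j * (real j + real n + 2) | j. True}"
    using reduced_spectrum_imp_gegenbauer_eigenvalue[OF n(2)]
      gegenbauer_eigenvalue_in_reduced_spectrum by blast
  moreover have "equivariant_spectrum n p \<rho> = reduced_spectrum n" if "\<rho> = 1 \<or> \<rho> = -1" for \<rho>
    using equivariant_spectrum_pm1[OF n(1) that] .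
  ultimately show ?thesis
    by simp
qed

end
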